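(* Let $\mathcal A,\mathcal B>0$, $\alpha,\beta\in(0,1)$, $h,\tau>0$. If $$\frac{\tau^{\alpha}(-\alpha^2+4\alpha-2)\mathcal A+\tau^{\beta}(-\beta^2+4\beta-2)\mathcal B}{h^2}\le\frac{279}{952},$$ then for every real $\theta$, with $s=\sin^2(\theta h/2)$, $$\widetilde{\mathcal P}=\Big[1-\tfrac{4}{35}s^3\Big]-4g_1^{(\alpha,\beta)}s\Big[1+\tfrac13 s+\tfrac{8}{45}s^2\Big]\ge0.$$
   Context: $\varpi_\ell^{(\sigma)}=(-1)^\ell\binom{\sigma}{\ell}$, $g_0^{(\sigma)}=\frac{1+\sigma}{2}\varpi_0^{(\sigma)}$, $g_\ell^{(\sigma)}=\frac{1+\sigma}{2}\varpi_\ell^{(\sigma)}+\frac{1-\sigma}{2}\varpi_{\ell-1}^{(\sigma)}$ ($\ell\ge1$); $\mu_\alpha=\tau^\alpha\mathcal A/h^2$, $\mu_\beta=\tau^\beta\mathcal B/h^2$, $g_\ell^{(\alpha,\beta)}=\mu_\alpha g_\ell^{(1-\alpha)}+\mu_\beta g_\ell^{(1-\beta)}$. *)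

theory Defs
  imports Complex_Main
begin

definition varpi :: "real \<Rightarrow> nat \<Rightarrow> real" where
  "varpi \<sigma> l = (-1) ^ l * (\<sigma> gchoose l)"

definition gcoef :: "real \<Rightarrow> nat \<Rightarrow> real" where
  "gcoef \<sigma> l = (if l = 0 then (1 + \<sigma>) / 2 * varpi \<sigma> 0
     else (1 + \<sigma>) / 2 * varpi \<sigma> l + (1 - \<sigma>) / 2 * varpi \<sigma> (l - 1))"

definition gab :: "real \<Rightarrow> real \<Rightarrow> real \<Rightarrow> real \<Rightarrow> real \<Rightarrow> real \<Rightarrow> nat \<Rightarrow> real" where
  "gab a b \<alpha> \<beta> \<tau> h l =
     (\<tau> powr \<alpha> * a / h^2) * gcoef (1 - \<alpha>) l + (\<tau> powr \<beta> * b / h^2) * gcoef (1 - \<beta>) l"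

end

theory Submission
  imports Defs
begin

text \<open>
  Only the first coefficient enters, and twice it is exactly the left-hand side of the
  hypothesis. For s in [0, 1] we have s^3 \<le> 1 and s (1 + s/3 + 8/45 s^2) \<le> 68/45, so the
  symbol is at least 1 - 4/35 - 4 g_1 68/45. The constant 279/952 is chosen so that
  279/476 * 68/45 = 31/35, which makes this lower bound exactly 0.
\<close>

lemma gcoef_one_minus_1: "gcoef (1 - a) 1 = (- (a^2) + 4*a - 2) / 2"
  by (simp add: gcoef_def varpi_def power2_eq_square field_simps)

lemma gab_1_eq:
  "2 * gab A B \<alpha> \<beta> \<tau> h 1 =
     (\<tau> powr \<alpha> * (- (\<alpha>^2) + 4*\<alpha> - 2) * A + \<tau> powr \<beta> * (- (\<beta>^2) + 4*\<beta> - 2) * B) / h^2"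
  unfolding gab_def gcoef_one_minus_1 by (simp add: diff_divide_distrib add_divide_distrib algebra_simps)

lemma sin_squared_bounds: "0 \<le> (sin x)^2" "(sin x)^2 \<le> (1::real)"
  by (simp_all add: abs_square_le_1)

lemma symbol_polynomial_nonneg:
  fixes s c :: real
  assumes "0 \<le> s" "s \<le> 1" "c \<le> 279/476"
  shows "(1 - 4/35 * s^3) - c * s * (1 + s/3 + 8/45 * s^2) \<ge> 0"
proof -
  define q where "q = s * (1 + s/3 + 8/45 * s^2)"
  have q_nonneg: "0 \<le> q"
    unfolding q_def using assms(1) by simp
  have "1 + s/3 + 8/45 * s^2 \<le> 68/45"
    using assms(1,2) power_le_one[of s 2] by simp
  then have q_le: "q \<le> 68/45"
    unfolding q_def using assms(1,2) mult_mono[of s 1 _ "68/45"] by simp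
  have "c * q \<le> 31/35"
  proof (cases "c \<le> 0")
    case True
    then show ?thesis using q_nonneg mult_nonpos_nonneg[of c q] by simp
  next
    case False
    have "c * q \<le> 279/476 * q" using mult_right_mono[OF assms(3) q_nonneg] .
    also have "\<dots> \<le> 279/476 * (68/45)" using q_le by simp
    finally show ?thesis by simp
  qed
  moreover have "s^3 \<le> 1" using assms(1,2) by (simp add: power_le_one)
  ultimately have "(1 - 4/35 * s^3) - c * q \<ge> 0" by linarith
  then show ?thesis unfolding q_def by (simp add: mult.assoc)
qed

theorem lemma9:
  fixes A B \<alpha> \<beta> h \<tau> :: real
  assumes "A > 0" "B > 0" "0 < \<alpha>" "\<alpha> < 1" "0 < \<beta>" "\<beta> < 1" "h > 0" "\<tau> > 0"
    and "(\<tau> powr \<alpha> * (- (\<alpha>^2) + 4*\<alpha> - 2) * A + \<tau> powr \<beta> * (- (\<beta>^2) + 4*\<beta> - 2) * B) / h^2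
           \<le> 279 / 952"
  shows "\<forall>\<theta>::real. let s = (sin (\<theta> * h / 2))^2 in
           (1 - 4/35 * s^3) - 4 * gab A B \<alpha> \<beta> \<tau> h 1 * s * (1 + s/3 + 8/45 * s^2) \<ge> 0"
proof (intro allI, unfold Let_def)
  fix \<theta> :: real
  have "4 * gab A B \<alpha> \<beta> \<tau> h 1 \<le> 279/476"
    using assms(9) gab_1_eq[of A B \<alpha> \<beta> \<tau> h] by linarith
  then show "(1 - 4/35 * ((sin (\<theta> * h / 2))^2)^3)
      - 4 * gab A B \<alpha> \<beta> \<tau> h 1 * (sin (\<theta> * h / 2))^2
        * (1 + (sin (\<theta> * h / 2))^2 / 3 + 8/45 * ((sin (\<theta> * h / 2))^2)^2) \<ge> 0"
    using symbol_polynomial_nonneg sin_squared_bounds by blast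
qed

end
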